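(* Let $Q:\mathbb C\to\mathbb C$ be a polynomial of odd degree $2g+1$ with $2g$ distinct critical values, and let $f:\mathbb C\to\mathbb C$ be a diffeomorphism such that $Q(f(x))=Q(x)$ for all $x\in\mathbb C$. Then $f(x)=x$ for all $x$. *)

theory Defs
  imports "HOL-Analysis.Analysis" "HOL-Computational_Algebra.Polynomial"
begin

text \<open>C-infinity maps of the complex plane, viewed as the real plane R^2:
  a map is smooth iff it is (real-)Frechet differentiable everywhere and both of
  its partial derivatives (in directions 1 and i) are again smooth.\<close>
coinductive smooth_map :: "(complex \<Rightarrow> complex) \<Rightarrow> bool" where
  "(\<forall>x. g differentiable (at x)) \<Longrightarrow>
   smooth_map (\<lambda>x. frechet_derivative g (at x) 1) \<Longrightarrow>
   smooth_map (\<lambda>x. frechet_derivative g (at x) \<i>) \<Longrightarrow>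
   smooth_map g"

definition diffeomorphism_C :: "(complex \<Rightarrow> complex) \<Rightarrow> bool" where
  "diffeomorphism_C f \<longleftrightarrow> bij f \<and> smooth_map f \<and> smooth_map (inv f)"

definition critical_values :: "complex poly \<Rightarrow> complex set" where
  "critical_values Q = {poly Q z | z. poly (pderiv Q) z = 0}"

end

theory Submission
  imports Defs "HOL-Complex_Analysis.Complex_Analysis"
begin

text \<open>
  Differentiating \<open>Q \<circ> f = Q\<close> gives \<open>Q'(f z) \<cdot> Df(z) = Q'(z)\<close>, so wherever \<open>Q'(f z) \<noteq> 0\<close> the
  real derivative of \<open>f\<close> is complex linear. Hence \<open>f\<close> is holomorphic off the finite set
  \<open>f\<^sup>-\<^sup>1(crit Q)\<close>, and being continuous it is entire. Comparing \<open>|Q(f z)| = |Q(z)|\<close> at infinity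
  shows that \<open>f\<close> grows at most linearly, so by Liouville \<open>f\<close> is affine. An affine map preserving
  \<open>Q\<close> permutes the critical points and preserves the critical value at each of them; since the
  \<open>2g\<close> critical values are distinct, it fixes all \<open>2g \<ge> 2\<close> critical points, hence is the
  identity. (For \<open>g = 0\<close>, \<open>Q\<close> itself is injective. In even degree the argument fails: the
  reflection \<open>z \<mapsto> 2c - z\<close> preserves \<open>(z - c)\<^sup>2\<close>.)
\<close>

lemma smooth_map_differentiable:
  assumes "smooth_map f"
  shows "f differentiable (at x)"
  using assms by (cases rule: smooth_map.cases) auto

lemma has_field_derivative_of_comp_invariant:
  fixes f h :: "'a::real_normed_field \<Rightarrow> 'a"
  assumes "f differentiable (at z)"
    and "h \<circ> f = h"
    and "(h has_field_derivative h') (at z)"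
    and "(h has_field_derivative h'') (at (f z))"
    and "h'' \<noteq> 0"
  shows "(f has_field_derivative h' / h'') (at z)"
proof -
  obtain D where D: "(f has_derivative D) (at z)"
    using assms(1) unfolding differentiable_def by blast
  have "(h \<circ> f has_derivative (\<lambda>v. h'' * D v)) (at z)"
    using has_derivative_compose[OF D assms(4)[unfolded has_field_derivative_def]]
    by (simp add: o_def)
  then have "(h has_derivative (\<lambda>v. h'' * D v)) (at z)"
    using assms(2) by simp
  then have "(\<lambda>v. h'' * D v) = (\<lambda>v. h' * v)"
    using has_derivative_unique assms(3)[unfolded has_field_derivative_def] by blast
  then have D_eq: "D = (*) (h' / h'')"
    using assms(5) by (auto simp: fun_eq_iff field_simps dest: fun_cong)
  show ?thesis
    using D unfolding D_eq has_field_derivative_def .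
qed

lemma entire_of_poly_invariant:
  fixes Q :: "complex poly"
  assumes "\<And>x. f differentiable (at x)"
    and "inj f"
    and "pderiv Q \<noteq> 0"
    and "\<And>x. poly Q (f x) = poly Q x"
  shows "f holomorphic_on UNIV"
proof -
  let ?K = "f -` {z. poly (pderiv Q) z = 0}"
  have "finite ?K"
    using finite_vimageI[OF poly_roots_finite[OF assms(3)] assms(2)] .
  moreover have "f holomorphic_on (UNIV - ?K)"
  proof -
    have "poly Q \<circ> f = poly Q"
      using assms(4) by (auto simp: fun_eq_iff)
    then have "f field_differentiable (at z)" if "z \<notin> ?K" for z
      using has_field_derivative_of_comp_invariant[OF assms(1) _ poly_DERIV poly_DERIV] that
      unfolding field_differentiable_def by blast
    then show ?thesis
      using \<open>finite ?K\<close>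
      by (simp add: holomorphic_on_open open_Diff finite_imp_closed field_differentiable_def)
  qed
  moreover have "continuous_on UNIV f"
    using assms(1) by (simp add: continuous_at_imp_continuous_on differentiable_imp_continuous_within)
  ultimately show ?thesis
    using no_isolated_singularity[OF _ _ open_UNIV] by blast
qed

lemma poly_norm_bounds_at_infinity:
  fixes p :: "'a::real_normed_field poly"
  assumes "p \<noteq> 0"
  obtains R where "R \<ge> 1"
    and "\<And>w. R \<le> norm w \<Longrightarrow> norm (lead_coeff p) / 2 * norm w ^ degree p \<le> norm (poly p w)"
    and "\<And>w. R \<le> norm w \<Longrightarrow> norm (poly p w) \<le> 3 / 2 * norm (lead_coeff p) * norm w ^ degree p"
proof -
  let ?L = "lead_coeff p"
  have "eventually (\<lambda>w. dist (poly p w / w ^ degree p) ?L < norm ?L / 2) at_infinity"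
    using poly_divide_tendsto_aux[of p] assms by (intro tendstoD) auto
  then obtain b where b: "\<And>w. b \<le> norm w \<Longrightarrow> dist (poly p w / w ^ degree p) ?L < norm ?L / 2"
    unfolding eventually_at_infinity by blast
  define R where "R = max 1 b"
  have "\<bar>norm (poly p w) / norm w ^ degree p - norm ?L\<bar> < norm ?L / 2" if "R \<le> norm w" for w
    using b[of w] that norm_triangle_ineq3[of "poly p w / w ^ degree p" ?L]
    by (simp add: R_def dist_norm norm_divide norm_power)
  then have ratio: "norm ?L / 2 < norm (poly p w) / norm w ^ degree p"
    "norm (poly p w) / norm w ^ degree p < 3 / 2 * norm ?L" if "R \<le> norm w" for w
    using that by (simp_all only: abs_less_iff) fastforce+
  have pos: "norm w ^ degree p > 0" if "R \<le> norm w" for w :: 'a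
    using that by (intro zero_less_power) (auto simp: R_def)
  show ?thesis
  proof (rule that)
    show "1 \<le> R"
      by (simp add: R_def)
  next
    fix w :: 'a
    assume w: "R \<le> norm w"
    show "norm ?L / 2 * norm w ^ degree p \<le> norm (poly p w)"
      and "norm (poly p w) \<le> 3 / 2 * norm ?L * norm w ^ degree p"
      using ratio[OF w] pos[OF w] by (simp_all add: pos_less_divide_eq pos_divide_less_eq)
  qed
qed

lemma poly_invariant_linear_growth:
  fixes p :: "'a::real_normed_field poly"
  assumes "degree p \<ge> 1"
    and "\<And>x. poly p (f x) = poly p x"
  obtains R B where "\<And>z. R \<le> norm z \<Longrightarrow> norm (f z) \<le> B * norm z"
proof -
  have "p \<noteq> 0" and L: "norm (lead_coeff p) > 0"
    using assms(1) by auto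
  obtain R where "R \<ge> 1"
    and lower: "\<And>w. R \<le> norm w \<Longrightarrow> norm (lead_coeff p) / 2 * norm w ^ degree p \<le> norm (poly p w)"
    and upper: "\<And>w. R \<le> norm w \<Longrightarrow> norm (poly p w) \<le> 3 / 2 * norm (lead_coeff p) * norm w ^ degree p"
    using poly_norm_bounds_at_infinity[OF \<open>p \<noteq> 0\<close>] by blast
  have "norm (f z) \<le> max 3 R * norm z" if z: "R \<le> norm z" for z
  proof (cases "R \<le> norm (f z)")
    case False
    have "R * 1 \<le> R * norm z"
      using z \<open>R \<ge> 1\<close> by (intro mult_left_mono) auto
    also have "\<dots> \<le> max 3 R * norm z"
      by (intro mult_right_mono) auto
    finally show ?thesis
      using False by simp
  next
    case True
    have "norm (lead_coeff p) * norm (f z) ^ degree p \<le> norm (lead_coeff p) * (3 * norm z ^ degree p)"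
      using lower[OF True] upper[OF z] assms(2)[of z] by simp
    then have "norm (f z) ^ degree p \<le> 3 * norm z ^ degree p"
      using L by simp
    also have "\<dots> \<le> 3 ^ degree p * norm z ^ degree p"
      using assms(1) by (intro mult_right_mono self_le_power) auto
    finally have "norm (f z) ^ degree p \<le> (3 * norm z) ^ degree p"
      by (simp only: power_mult_distrib)
    then have "norm (f z) \<le> 3 * norm z"
      using assms(1) power_mono_iff[of "norm (f z)" "3 * norm z" "degree p"] by simp
    also have "\<dots> \<le> max 3 R * norm z"
      by (intro mult_right_mono) auto
    finally show ?thesis .
  qed
  then show ?thesis
    using that by blast
qed

lemma entire_affine_of_linear_growth:
  fixes f :: "complex \<Rightarrow> complex"
  assumes "f holomorphic_on UNIV"
    and "\<And>z. R \<le> norm z \<Longrightarrow> norm (f z) \<le> B * norm z"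
  shows "f = (\<lambda>z. f 0 + deriv f 0 * z)"
proof
  fix z
  have "\<And>z. R \<le> norm z \<Longrightarrow> norm (f z) \<le> B * norm z ^ 1"
    using assms(2) by simp
  then have "f z = (\<Sum>k\<le>1. (deriv ^^ k) f 0 / fact k * z ^ k)"
    by (rule Liouville_polynomial[OF assms(1)])
  then show "f z = f 0 + deriv f 0 * z"
    by (simp add: atMost_Suc)
qed

lemma
  fixes Q :: "complex poly"
  assumes "degree Q \<ge> 1"
    and "finite (critical_values Q)"
    and "card (critical_values Q) = degree Q - 1"
  shows card_critical_points: "card {z. poly (pderiv Q) z = 0} = degree Q - 1"
    and inj_on_poly_critical_points: "inj_on (poly Q) {z. poly (pderiv Q) z = 0}"
proof -
  let ?C = "{z. poly (pderiv Q) z = 0}"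
  have "pderiv Q \<noteq> 0"
    using assms(1) by (simp add: pderiv_eq_0_iff)
  then have "finite ?C" and "card ?C \<le> degree Q - 1"
    using poly_roots_finite card_poly_roots_bound[of "pderiv Q"] by (auto simp: degree_pderiv)
  moreover have "critical_values Q = poly Q ` ?C"
    unfolding critical_values_def by auto
  ultimately have "card (poly Q ` ?C) = card ?C" and "card ?C = degree Q - 1"
    using card_image_le[of ?C "poly Q"] assms(3) by auto
  then show "card ?C = degree Q - 1" and "inj_on (poly Q) ?C"
    using \<open>finite ?C\<close> by (auto intro: eq_card_imp_inj_on)
qed

lemma inj_poly_of_degree_one:
  fixes Q :: "'a::idom poly"
  assumes "degree Q = 1"
  shows "inj (poly Q)"
proof
  fix x y
  assume "poly Q x = poly Q y"
  moreover have "poly Q x = coeff Q 0 + coeff Q 1 * x" for x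
    using assms by (simp add: poly_altdef)
  moreover have "coeff Q 1 \<noteq> 0"
    using assms leading_coeff_0_iff[of Q] by auto
  ultimately show "x = y"
    by simp
qed

lemma affine_poly_invariant_fixes_critical_point:
  fixes Q :: "'a::real_normed_field poly"
  assumes "a \<noteq> 0"
    and "\<And>z. poly Q (b + a * z) = poly Q z"
    and "inj_on (poly Q) {z. poly (pderiv Q) z = 0}"
    and "poly (pderiv Q) c = 0"
  shows "b + a * c = c"
proof -
  have "((\<lambda>z. poly Q (b + a * z)) has_field_derivative poly (pderiv Q) (b + a * c) * a) (at c)"
    by (rule DERIV_chain2[OF poly_DERIV]) (auto intro!: derivative_eq_intros)
  moreover have "(\<lambda>z. poly Q (b + a * z)) = poly Q"
    using assms(2) by (simp add: fun_eq_iff)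
  ultimately have "(poly Q has_field_derivative poly (pderiv Q) (b + a * c) * a) (at c)"
    by simp
  then have "poly (pderiv Q) (b + a * c) * a = poly (pderiv Q) c"
    using poly_DERIV[of Q c] by (rule DERIV_unique)
  then have "poly (pderiv Q) (b + a * c) = 0"
    using assms(1,4) by simp
  then show ?thesis
    using assms(2,3,4) by (auto dest: inj_onD)
qed

lemma affine_eq_id_of_two_fixed_points:
  fixes a b :: "'a::field"
  assumes "c\<^sub>1 \<noteq> c\<^sub>2" and "b + a * c\<^sub>1 = c\<^sub>1" and "b + a * c\<^sub>2 = c\<^sub>2"
  shows "a = 1" and "b = 0"
proof -
  have "a * (c\<^sub>1 - c\<^sub>2) = (b + a * c\<^sub>1) - (b + a * c\<^sub>2)"
    by (simp add: algebra_simps)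
  then have "a * (c\<^sub>1 - c\<^sub>2) = 1 * (c\<^sub>1 - c\<^sub>2)"
    using assms(2,3) by simp
  then show "a = 1"
    using assms(1) by simp
  then show "b = 0"
    using assms(2) by simp
qed

theorem mainTheorem8:
  fixes Q :: "complex poly" and g :: nat and f :: "complex \<Rightarrow> complex"
  assumes "degree Q = 2 * g + 1"
    and "finite (critical_values Q)" and "card (critical_values Q) = 2 * g"
    and "diffeomorphism_C f"
    and "\<And>x. poly Q (f x) = poly Q x"
  shows "\<forall>x. f x = x"
proof (cases "g = 0")
  case True
  then have "inj (poly Q)"
    using assms(1) by (intro inj_poly_of_degree_one) simp
  then show ?thesis
    using assms(5) by (auto dest: injD)
next
  case False
  let ?C = "{z. poly (pderiv Q) z = 0}"
  have "inj f" and "\<And>x. f differentiable (at x)"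
    using assms(4) smooth_map_differentiable bij_is_inj by (auto simp: diffeomorphism_C_def)
  moreover have "pderiv Q \<noteq> 0"
    using assms(1) by (simp add: pderiv_eq_0_iff)
  ultimately have "f holomorphic_on UNIV"
    using entire_of_poly_invariant assms(5) by blast
  moreover obtain R B where "\<And>z. R \<le> norm z \<Longrightarrow> norm (f z) \<le> B * norm z"
    using poly_invariant_linear_growth[of Q f] assms(1,5) by auto
  ultimately have "f = (\<lambda>z. f 0 + deriv f 0 * z)"
    by (rule entire_affine_of_linear_growth)
  then obtain a b where f_eq: "f = (\<lambda>z. b + a * z)"
    by blast
  have inj_C: "inj_on (poly Q) ?C"
    using inj_on_poly_critical_points assms(1-3) by simp
  have "card ?C \<ge> 2"
    using card_critical_points assms(1-3) False by simp
  then obtain T where "T \<subseteq> ?C" and "card T = 2"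
    by (rule obtain_subset_with_card_n)
  then obtain c\<^sub>1 c\<^sub>2 where c: "c\<^sub>1 \<in> ?C" "c\<^sub>2 \<in> ?C" "c\<^sub>1 \<noteq> c\<^sub>2"
    by (auto simp: card_2_iff)
  have "a \<noteq> 0"
    using \<open>inj f\<close> c by (auto simp: f_eq dest: injD)
  then have "b + a * c = c" if "c \<in> ?C" for c
    using affine_poly_invariant_fixes_critical_point[OF _ _ inj_C] assms(5) that
    by (simp add: f_eq)
  then have "a = 1" and "b = 0"
    using affine_eq_id_of_two_fixed_points[OF c(3)] c(1,2) by blast+
  then show ?thesis
    by (simp add: f_eq)
qed

end
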